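(* Let $C_1$ and $C_2$ be two linear MDS codes of the same length $n$ over $\mathbb{F}_q$. If $C_1\not\subseteq C_2$, then $wt(C_1\setminus(C_1\cap C_2))=wt(C_1)$.
   Context: An $[n,k,d]_q$ linear code is a $k$-dimensional subspace of $\mathbb{F}_q^n$ with minimum Hamming distance $d$; it is MDS if $d=n-k+1$. For a subset $\mathcal{A}\subseteq\mathbb{F}_q^n$, $wt(\mathcal{A})=\min\{wt(\bm a):\bm a\in\mathcal{A}\setminus\{\bm 0\}\}$, where $wt(\bm a)$ is the Hamming weight (number of nonzero coordinates). *)

theory Defs
  imports "HOL-Analysis.Analysis"
begin

text \<open>Vectors of length n over F_q are modelled as 'a ^ 'n with 'a a finite field
  and 'n a finite index type with CARD('n) = n.\<close>

definition hwt :: "'a::zero ^ 'n::finite \<Rightarrow> nat" where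
  "hwt v = card {i. v $ i \<noteq> 0}"

definition wt_set :: "('a::zero ^ 'n::finite) set \<Rightarrow> nat" where
  "wt_set A = Min (hwt ` (A - {0}))"

definition linear_code :: "('a::{finite,field} ^ 'n::finite) set \<Rightarrow> bool" where
  "linear_code C \<longleftrightarrow> vec.subspace C"

definition MDS_code :: "('a::{finite,field} ^ 'n::finite) set \<Rightarrow> bool" where
  "MDS_code C \<longleftrightarrow> linear_code C \<and> wt_set C = CARD('n) - vec.dim C + 1"

end

theory Submission imports Defs begin

text \<open>Only the MDS property of \<open>C\<^sub>1\<close> matters. Let \<open>k = dim C\<^sub>1\<close>. A word \<open>x \<in> C\<^sub>1 - C\<^sub>2\<close>
  of least weight has weight at most \<open>n - k + 1\<close>: otherwise its zero set together with one
  coordinate \<open>j\<close> of its support has fewer than \<open>k\<close> elements, so some nonzero \<open>y \<in> C\<^sub>1\<close> vanishes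
  there. Either \<open>y \<notin> C\<^sub>2\<close>, or \<open>y \<in> C\<^sub>2\<close> and \<open>x - (x\<^sub>i / y\<^sub>i) y\<close> with \<open>y\<^sub>i \<noteq> 0\<close> stays outside \<open>C\<^sub>2\<close>;
  in both cases we get a lighter word of \<open>C\<^sub>1 - C\<^sub>2\<close>. As \<open>wt(C\<^sub>1) = n - k + 1\<close>, the minimum weight
  over the smaller set \<open>C\<^sub>1 - C\<^sub>2\<close> can be neither smaller nor larger.\<close>

definition coord_proj :: "'n set \<Rightarrow> 'a::zero ^ 'n \<Rightarrow> 'a ^ 'n" where
  "coord_proj S x = (\<chi> i. if i \<in> S then x $ i else 0)"

lemma linear_coord_proj: "Vector_Spaces.linear (*s) (*s) (coord_proj S :: 'a::field ^ 'n \<Rightarrow> _)"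
  by (auto simp: Vector_Spaces.linear_iff vec.vector_space_axioms vec_eq_iff coord_proj_def)

lemma coord_proj_eq_sum_axis:
  fixes x :: "'a::field ^ 'n"
  shows "coord_proj S x = (\<Sum>i\<in>S. x $ i *s axis i 1)"
  by (auto simp: vec_eq_iff sum_component axis_def coord_proj_def
        if_distrib[of "(*) _"] sum.delta cong: if_cong)

lemma dim_coord_proj_image_le:
  fixes C :: "('a::field ^ 'n) set"
  shows "vec.dim (coord_proj S ` C) \<le> card S"
proof -
  have "coord_proj S ` C \<subseteq> vec.span ((\<lambda>i. axis i 1) ` S)"
    unfolding coord_proj_eq_sum_axis
    by (auto intro!: vec.span_sum, rule vec.span_scale, rule vec.span_base) simp
  then have "vec.dim (coord_proj S ` C) \<le> card ((\<lambda>i. axis i (1::'a)) ` S)"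
    by (rule vec.dim_le_card) simp
  also have "\<dots> \<le> card S"
    by (rule card_image_le) simp
  finally show ?thesis .
qed

lemma exists_nonzero_vanishing_on:
  fixes C :: "('a::field ^ 'n) set"
  assumes "vec.subspace C" and "card S < vec.dim C"
  shows "\<exists>x\<in>C. x \<noteq> 0 \<and> (\<forall>i\<in>S. x $ i = 0)"
proof (rule ccontr)
  assume "\<not> ?thesis"
  then have "\<forall>x\<in>C. coord_proj S x = 0 \<longrightarrow> x = 0"
    by (auto simp: coord_proj_def vec_eq_iff)
  then have "inj_on (coord_proj S) (vec.span C)"
    using vec.linear_inj_on_iff_eq_0[OF linear_coord_proj assms(1)]
    by (simp add: vec.span_eq_iff[THEN iffD2, OF assms(1)])
  then have "vec.dim (coord_proj S ` C) = vec.dim C"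
    by (rule vec.dim_image_eq[OF linear_coord_proj])
  with dim_coord_proj_image_le[of S C] assms(2) show False
    by linarith
qed

lemma hwt_le_card: "hwt (v :: 'a::zero ^ 'n) \<le> CARD('n)"
  unfolding hwt_def by (rule card_mono) auto

lemma card_zero_coords: "card {i. (v :: 'a::zero ^ 'n) $ i = 0} = CARD('n) - hwt v"
proof -
  have "card {i. v $ i = 0} + hwt v = CARD('n)"
    unfolding hwt_def
    by (subst card_Un_disjoint[symmetric]) (auto intro: arg_cong[where f = card])
  then show ?thesis by linarith
qed

lemma hwt_strict_mono:
  "{i. (u :: 'a::zero ^ 'n) $ i \<noteq> 0} \<subset> {i. v $ i \<noteq> 0} \<Longrightarrow> hwt u < hwt v"
  unfolding hwt_def by (rule psubset_card_mono) auto

lemma exists_lighter_outside_subspace: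
  fixes C D :: "('a::field ^ 'n) set"
  assumes C: "vec.subspace C" and D: "vec.subspace D"
    and x: "x \<in> C" "x \<notin> D" and heavy: "CARD('n) - vec.dim C + 1 < hwt x"
  shows "\<exists>x'\<in>C. x' \<notin> D \<and> hwt x' < hwt x"
proof -
  define Z where "Z = {i. x $ i = 0}"
  obtain j where j: "x $ j \<noteq> 0"
    using heavy by (metis (mono_tags) Collect_empty_eq card.empty hwt_def not_less_zero)
  have "card (insert j Z) = CARD('n) - hwt x + 1"
    using j by (simp add: Z_def card_zero_coords)
  also have "\<dots> < vec.dim C"
    using heavy hwt_le_card[of x] by linarith
  finally obtain y where y: "y \<in> C" "y \<noteq> 0" and y_vanishes: "\<forall>i\<in>insert j Z. y $ i = 0"
    using exists_nonzero_vanishing_on[OF C] by blast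
  show ?thesis
  proof (cases "y \<in> D")
    case False
    have "{i. y $ i \<noteq> 0} \<subset> {i. x $ i \<noteq> 0}"
      using y_vanishes j by (auto simp: Z_def)
    then have "hwt y < hwt x"
      by (rule hwt_strict_mono)
    with y(1) False show ?thesis
      by blast
  next
    case True
    obtain i where i: "y $ i \<noteq> 0"
      using y(2) by (metis vec_eq_iff zero_index)
    define x' where "x' = x - (x $ i / y $ i) *s y"
    have "x' \<in> C"
      unfolding x'_def by (intro vec.subspace_diff[OF C] vec.subspace_scale[OF C] x(1) y(1))
    moreover have "x' \<notin> D"
    proof
      assume "x' \<in> D"
      then have "x' + (x $ i / y $ i) *s y \<in> D"
        by (intro vec.subspace_add[OF D] vec.subspace_scale[OF D] True)
      with x(2) show False by (simp add: x'_def)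
    qed
    moreover have "{k. x' $ k \<noteq> 0} \<subset> {k. x $ k \<noteq> 0}"
    proof -
      have "{k. x' $ k \<noteq> 0} \<subseteq> {k. x $ k \<noteq> 0}"
        using y_vanishes by (auto simp: x'_def Z_def)
      moreover have "x' $ i = 0" and "x $ i \<noteq> 0"
        using i y_vanishes by (auto simp: x'_def Z_def)
      ultimately show ?thesis
        by blast
    qed
    then have "hwt x' < hwt x"
      by (rule hwt_strict_mono)
    ultimately show ?thesis
      by blast
  qed
qed

lemma exists_low_weight_outside_subspace:
  fixes C D :: "('a::field ^ 'n) set"
  assumes "vec.subspace C" and "vec.subspace D" and "\<not> C \<subseteq> D"
  shows "\<exists>x\<in>C. x \<notin> D \<and> hwt x \<le> CARD('n) - vec.dim C + 1"
proof -
  obtain x where x: "x \<in> C - D" and least: "\<forall>x'. x' \<in> C - D \<longrightarrow> hwt x \<le> hwt x'"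
    using ex_has_least_nat[of "\<lambda>x. x \<in> C - D"] assms(3) by blast
  with exists_lighter_outside_subspace[OF assms(1,2)] show ?thesis
    by (metis DiffD1 DiffD2 DiffI not_le)
qed

lemma finite_hwt_image: "finite (hwt ` (A :: ('a::zero ^ 'n) set))"
  by (rule finite_subset[of _ "{..CARD('n)}"]) (auto simp: hwt_le_card)

lemma wt_set_le_hwt: "x \<in> A \<Longrightarrow> x \<noteq> 0 \<Longrightarrow> wt_set A \<le> hwt x"
  unfolding wt_set_def by (rule Min_le) (auto simp: finite_hwt_image)

lemma wt_set_antimono:
  "A \<subseteq> B \<Longrightarrow> A - {0} \<noteq> {} \<Longrightarrow> wt_set B \<le> wt_set (A :: ('a::zero ^ 'n) set)"
  unfolding wt_set_def by (rule Min_antimono) (auto simp: finite_hwt_image)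

theorem lemma4:
  fixes C1 C2 :: "('a::{finite,field} ^ 'n::finite) set"
  assumes "MDS_code C1" and "MDS_code C2"
    and "\<not> C1 \<subseteq> C2"
  shows "wt_set (C1 - (C1 \<inter> C2)) = wt_set C1"
proof -
  have "vec.subspace C1" and "vec.subspace C2"
    using assms(1,2) by (auto simp: MDS_code_def linear_code_def)
  then obtain x where x: "x \<in> C1" "x \<notin> C2" and light: "hwt x \<le> CARD('n) - vec.dim C1 + 1"
    using exists_low_weight_outside_subspace assms(3) by blast
  have "x \<noteq> 0"
    using x(2) vec.subspace_0[OF \<open>vec.subspace C2\<close>] by auto
  then have "wt_set (C1 - (C1 \<inter> C2)) \<le> hwt x"
    using x by (intro wt_set_le_hwt) auto
  also have "\<dots> \<le> wt_set C1"
    using light assms(1) by (simp add: MDS_code_def)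
  moreover have "wt_set C1 \<le> wt_set (C1 - (C1 \<inter> C2))"
    using \<open>x \<noteq> 0\<close> x by (intro wt_set_antimono) blast+
  ultimately show ?thesis
    by linarith
qed

end
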